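(* Let $\nu\in\mathbb{N}$, let $(X,d)$ be a $\nu$-generalized metric space, let $T:X\to X$, and let $m:X\times X\to[0,\infty)$. Suppose that for some $x\in X$ the following hold: (i) for every $\epsilon>0$ there exist $\delta>0$ and $N\in\mathbb{Z}^+$ such that for all $p,q\ge N$, $m(T^px,T^qx)<\delta+\epsilon$ implies $d(T^{p+1}x,T^{q+1}x)\le\epsilon$; (ii) for any two subsequences $\{T^{p_i}x\}$ and $\{T^{q_i}x\}$ of $\{T^nx\}$, $\limsup_{i\to\infty} m(T^{p_i}x,T^{q_i}x)\le\limsup_{i\to\infty} d(T^{p_i}x,T^{q_i}x)$; (iii) $d(T^nx,T^{n+1}x)+d(T^nx,T^{n+2}x)\to0$ as $n\to\infty$. Then $\{T^nx\}$ is a Cauchy sequence.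
   Context: Let $X$ be a nonempty set, $d:X\times X\to[0,\infty)$, and $\nu\in\mathbb{N}$. $(X,d)$ is a $\nu$-generalized metric space if: (1) $d(x,y)=0$ iff $x=y$; (2) $d(x,y)=d(y,x)$ for all $x,y$; (3) $d(x,y)\le d(x,u_1)+d(u_1,u_2)+\dots+d(u_\nu,y)$ for every set $\{x,u_1,\dots,u_\nu,y\}$ of $\nu+2$ pairwise distinct elements of $X$. A sequence $\{x_n\}$ in $X$ is Cauchy if $\lim_{n\to\infty}\sup\{d(x_n,x_{n+1+m}): m\in\mathbb{Z}^+\}=0$, where $\mathbb{Z}^+$ denotes the nonnegative integers. A subsequence $\{x_{p_i}\}$ means $p_1<p_2<\cdots$. $T^n$ denotes the $n$-th iterate of $T$. *)

theory Defs
  imports "HOL-Analysis.Analysis"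
begin

fun pathlen :: "('a \<Rightarrow> 'a \<Rightarrow> real) \<Rightarrow> 'a list \<Rightarrow> real" where
  "pathlen d (a # b # rest) = d a b + pathlen d (b # rest)"
| "pathlen d _ = 0"

definition nu_gen_metric :: "nat \<Rightarrow> 'a set \<Rightarrow> ('a \<Rightarrow> 'a \<Rightarrow> real) \<Rightarrow> bool" where
  "nu_gen_metric \<nu> X d \<longleftrightarrow>
     X \<noteq> {} \<and>
     (\<forall>x\<in>X. \<forall>y\<in>X. 0 \<le> d x y) \<and>
     (\<forall>x\<in>X. \<forall>y\<in>X. d x y = 0 \<longleftrightarrow> x = y) \<and>
     (\<forall>x\<in>X. \<forall>y\<in>X. d x y = d y x) \<and>
     (\<forall>x\<in>X. \<forall>y\<in>X. \<forall>u. set u \<subseteq> X \<and> length u = \<nu> \<and> distinct (x # u @ [y])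
          \<longrightarrow> d x y \<le> pathlen d (x # u @ [y]))"

definition gen_cauchy :: "('a \<Rightarrow> 'a \<Rightarrow> real) \<Rightarrow> (nat \<Rightarrow> 'a) \<Rightarrow> bool" where
  "gen_cauchy d s \<longleftrightarrow> ((\<lambda>n. SUP k. ereal (d (s n) (s (n + 1 + k)))) \<longlonglongrightarrow> 0)"

end

theory Submission
  imports Defs
begin

text \<open>Write y n for the orbit T^n x. If the orbit repeats a point it is eventually periodic,
  and by (iii) the distances between consecutive points, being periodic and tending to 0, vanish:
  the orbit is eventually constant. Otherwise its points are pairwise distinct, so the
  generalized triangle inequality applies to any \<nu> + 2 of them. By (ii), m is eventually at
  most slightly larger than d, so (i) yields, for every \<epsilon> > 0, some \<gamma> > 0 such that
  d(y p, y q) < \<epsilon> + \<gamma> implies d(y (p+1), y (q+1)) \<le> \<epsilon> for large p, q.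
  Strong induction on k then gives d(y j, y (j+k)) < \<epsilon> + \<gamma> for all large j: for
  k \<le> \<nu> + 1 along a path through all of y j, ..., y (j+\<nu>+1) with hops of length 1 or 2,
  each of which is small by (iii); for larger k along y j, y (j+1), ..., y (j+\<nu>), y (j+k),
  whose last edge is controlled by the induction hypothesis and the contraction property.\<close>

definition small_hop :: "nat \<Rightarrow> nat \<Rightarrow> bool" where
  "small_hop a b \<longleftrightarrow> b = a + 1 \<or> b = a + 2 \<or> a = b + 1 \<or> a = b + 2"

lemma small_hop_shift [simp]: "small_hop (j + a) (j + b) \<longleftrightarrow> small_hop a b"
  by (auto simp: small_hop_def)

lemma successively_small_hop_upt: "successively small_hop [a..<b]"
  by (induction b) (auto simp: successively_append_iff small_hop_def)

text \<open>For instance zigzag 4 = [0, 2, 4, 3, 1].\<close>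
fun zigzag :: "nat \<Rightarrow> nat list" where
  "zigzag 0 = [0]"
| "zigzag (Suc n) = 0 # map Suc (rev (zigzag n))"

lemma set_zigzag [simp]: "set (zigzag n) = {0..n}"
proof (induction n)
  case (Suc n)
  have "insert 0 (Suc ` {0..n}) = {0..Suc n}"
    by (auto simp: image_iff)
  with Suc show ?case by simp
qed simp

lemma length_zigzag [simp]: "length (zigzag n) = n + 1"
  by (induction n) simp_all

lemma distinct_zigzag: "distinct (zigzag n)"
  by (induction n) (auto simp: distinct_map)

lemma zigzag_nonempty [simp]: "zigzag n \<noteq> []"
  by (cases n) simp_all

lemma hd_zigzag [simp]: "hd (zigzag n) = 0"
  by (cases n) simp_all

lemma last_zigzag: "last (zigzag n) = (if n = 0 then 0 else 1)"
  by (cases n) (simp_all add: last_map last_rev)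

lemma successively_small_hop_zigzag: "successively small_hop (zigzag n)"
proof (induction n)
  case (Suc n)
  have "successively (\<lambda>a b. small_hop (Suc b) (Suc a)) (zigzag n)"
    using Suc by (rule successively_mono) (auto simp: small_hop_def)
  moreover have "hd (map Suc (rev (zigzag n))) = Suc (last (zigzag n))"
    by (simp add: hd_map hd_rev)
  ultimately show ?case
    by (auto simp: successively_Cons successively_map successively_rev last_zigzag small_hop_def)
qed simp

definition hop_path :: "nat \<Rightarrow> nat \<Rightarrow> nat list" where
  "hop_path s M = [0..<s] @ map (\<lambda>i. i + s) (rev (zigzag (M - s)))"

lemma hop_path_props:
  assumes "1 \<le> s" "s \<le> M"
  shows "distinct (hop_path s M)" "length (hop_path s M) = M + 1"
    "hd (hop_path s M) = 0" "last (hop_path s M) = s"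
    "successively small_hop (hop_path s M)"
proof -
  show "distinct (hop_path s M)"
    using distinct_zigzag by (auto simp: hop_path_def distinct_map inj_on_def)
  show "length (hop_path s M) = M + 1" "hd (hop_path s M) = 0" "last (hop_path s M) = s"
    using assms by (simp_all add: hop_path_def hd_append last_map last_rev)
  have "successively (\<lambda>a b. small_hop (b + s) (a + s)) (zigzag (M - s))"
    using successively_small_hop_zigzag by (rule successively_mono) (auto simp: small_hop_def)
  then have "successively small_hop (map (\<lambda>i. i + s) (rev (zigzag (M - s))))"
    by (simp add: successively_map successively_rev)
  then show "successively small_hop (hop_path s M)"
    using assms successively_small_hop_upt[of 0 s]
    by (auto simp: hop_path_def successively_append_iff hd_map hd_rev last_zigzag small_hop_def)
qed

lemma pathlen_append: "pathlen d (xs @ z # ys) = pathlen d (xs @ [z]) + pathlen d (z # ys)"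
  by (induction xs rule: induct_list012) simp_all

lemma nu_gen_metricD:
  assumes "nu_gen_metric \<nu> X d" "a \<in> X" "b \<in> X"
  shows "0 \<le> d a b" "d a b = 0 \<longleftrightarrow> a = b" "d a b = d b a"
  using assms unfolding nu_gen_metric_def by auto

lemma nu_gen_metric_pathlen:
  assumes "nu_gen_metric \<nu> X d" "length L = \<nu> + 2" "distinct L" "set L \<subseteq> X"
  shows "d (hd L) (last L) \<le> pathlen d L"
proof -
  obtain a r where "L = a # r"
    using assms(2) by (cases L) auto
  moreover have "r \<noteq> []"
    using assms(2) calculation by auto
  ultimately obtain u b where L: "L = a # u @ [b]"
    by (metis rev_exhaust)
  have "length u = \<nu>"
    using assms(2) L by simp
  moreover have "\<forall>x\<in>X. \<forall>y\<in>X. \<forall>u. set u \<subseteq> X \<and> length u = \<nu> \<and> distinct (x # u @ [y])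
      \<longrightarrow> d x y \<le> pathlen d (x # u @ [y])"
    using assms(1) unfolding nu_gen_metric_def by blast
  ultimately show ?thesis
    using assms(3,4) L by simp
qed

lemma nu_gen_metric_pathlen_inj:
  assumes "nu_gen_metric \<nu> X d" "inj y" "range y \<subseteq> X"
    and "length L = \<nu> + 2" "distinct L"
  shows "d (y (hd L)) (y (last L)) \<le> pathlen d (map y L)"
proof -
  have "L \<noteq> []"
    using assms(4) by auto
  then show ?thesis
    using nu_gen_metric_pathlen[of \<nu> X d "map y L"] assms
    by (auto simp: distinct_map hd_map last_map intro: inj_on_subset)
qed

lemma pathlen_small_hops_le:
  assumes "\<And>i j. N \<le> i \<Longrightarrow> N \<le> j \<Longrightarrow> small_hop i j \<Longrightarrow> d (y i) (y j) \<le> c"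
  shows "successively small_hop L \<Longrightarrow> \<forall>i\<in>set L. N \<le> i \<Longrightarrow>
    pathlen d (map y L) \<le> real (length L - 1) * c"
proof (induction L rule: induct_list012)
  case (3 a b L)
  then have "d (y a) (y b) \<le> c"
    using assms by simp
  with 3 show ?case
    by (simp add: algebra_simps)
qed simp_all

lemma gen_cauchyI:
  assumes nonneg: "\<And>n k. 0 \<le> d (s n) (s k)"
    and small: "\<And>e. e > 0 \<Longrightarrow> \<exists>N. \<forall>n\<ge>N. \<forall>k. d (s n) (s (n + 1 + k)) \<le> e"
  shows "gen_cauchy d s"
  unfolding gen_cauchy_def
proof (rule order_tendstoI)
  fix l :: ereal
  assume "l < 0"
  have "l < (SUP k. ereal (d (s n) (s (n + 1 + k))))" for n
  proof -
    have "ereal (d (s n) (s (n + 1 + 0))) \<le> (SUP k. ereal (d (s n) (s (n + 1 + k))))"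
      by (rule SUP_upper) simp
    moreover have "0 \<le> ereal (d (s n) (s (n + 1 + 0)))"
      using nonneg by simp
    ultimately show ?thesis
      using \<open>l < 0\<close> by order
  qed
  then show "\<forall>\<^sub>F n in sequentially. l < (SUP k. ereal (d (s n) (s (n + 1 + k))))"
    by simp
next
  fix u :: ereal
  assume "0 < u"
  then obtain r where r: "0 < ereal r" "ereal r < u"
    using ereal_dense2 by blast
  then obtain N where "\<forall>n\<ge>N. \<forall>k. d (s n) (s (n + 1 + k)) \<le> r"
    using small by auto
  then have "(SUP k. ereal (d (s n) (s (n + 1 + k)))) \<le> ereal r" if "n \<ge> N" for n
    using that by (intro SUP_least) simp
  with r show "\<forall>\<^sub>F n in sequentially. (SUP k. ereal (d (s n) (s (n + 1 + k)))) < u"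
    unfolding eventually_sequentially by (meson le_less_trans)
qed

lemma frequently_pairs_strict_mono:
  assumes "\<And>N. \<exists>p q. N \<le> p \<and> N \<le> q \<and> P p q"
  obtains p q :: "nat \<Rightarrow> nat" where "strict_mono p" "strict_mono q" "\<forall>i. P (p i) (q i)"
proof -
  obtain p' q' where pq': "\<And>N. N \<le> p' N \<and> N \<le> q' N \<and> P (p' N) (q' N)"
    using assms by metis
  define h where "h v = max (p' v) (q' v) + 1" for v
  define g where "g n = (h ^^ n) 0" for n
  have g_Suc: "g (Suc n) = max (p' (g n)) (q' (g n)) + 1" for n
    by (simp add: g_def h_def)
  have "p' (g n) < p' (g (Suc n))" "q' (g n) < q' (g (Suc n))" for n
    using pq'[of "g (Suc n)"] unfolding g_Suc by (auto simp: Suc_le_eq intro: le_less_trans)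
  then have "strict_mono (p' \<circ> g)" "strict_mono (q' \<circ> g)"
    by (simp_all add: strict_mono_Suc_iff)
  with pq' show thesis
    using that[of "p' \<circ> g" "q' \<circ> g"] by simp
qed

lemma limsup_dominated_eventually_less:
  fixes D M :: "nat \<Rightarrow> nat \<Rightarrow> real"
  assumes dom: "\<And>p q. strict_mono p \<Longrightarrow> strict_mono q \<Longrightarrow>
      limsup (\<lambda>i. ereal (M (p i) (q i))) \<le> limsup (\<lambda>i. ereal (D (p i) (q i)))"
    and nonneg: "\<And>p q. 0 \<le> D p q" and "\<eta> > 0"
  shows "\<exists>N. \<forall>p q. N \<le> p \<longrightarrow> N \<le> q \<longrightarrow> D p q \<le> B \<longrightarrow> M p q < D p q + \<eta>"
proof (rule ccontr)
  assume contra: "\<not> ?thesis"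
  define bad where "bad p q \<longleftrightarrow> D p q \<le> B \<and> D p q + \<eta> \<le> M p q" for p q
  have "\<exists>p q. N \<le> p \<and> N \<le> q \<and> bad p q" for N
    using contra by (auto simp: bad_def not_less)
  then obtain p q :: "nat \<Rightarrow> nat" where pq: "strict_mono p" "strict_mono q"
    and "\<forall>i. bad (p i) (q i)"
    by (rule frequently_pairs_strict_mono)
  then have bad: "\<And>i. D (p i) (q i) \<le> B \<and> D (p i) (q i) + \<eta> \<le> M (p i) (q i)"
    by (simp add: bad_def)
  define L where "L = limsup (\<lambda>i. ereal (D (p i) (q i)))"
  have "L \<le> ereal B"
    using Limsup_mono[of "\<lambda>i. ereal (D (p i) (q i))" "\<lambda>_. ereal B" sequentially] bad
    by (simp add: L_def Limsup_const)
  moreover have "0 \<le> L"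
    using Limsup_mono[of "\<lambda>_. 0" "\<lambda>i. ereal (D (p i) (q i))" sequentially] nonneg
    by (simp add: L_def Limsup_const)
  ultimately obtain r where r: "L = ereal r"
    by (cases L) auto
  have "L + ereal \<eta> = limsup (\<lambda>i. ereal (D (p i) (q i)) + ereal \<eta>)"
    unfolding L_def by (rule Limsup_add_ereal_right[symmetric]) simp_all
  also have "\<dots> \<le> limsup (\<lambda>i. ereal (M (p i) (q i)))"
    using bad by (intro Limsup_mono always_eventually allI) simp
  also have "\<dots> \<le> L"
    using dom pq by (simp add: L_def)
  finally show False
    using r \<open>\<eta> > 0\<close> by simp
qed

lemma eventual_contraction:
  fixes D M :: "nat \<Rightarrow> nat \<Rightarrow> real"
  assumes i: "\<forall>\<epsilon>>0. \<exists>\<delta>>0. \<exists>N. \<forall>p q. N \<le> p \<and> N \<le> q \<and> M p q < \<delta> + \<epsilon> \<longrightarrow>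
      D (Suc p) (Suc q) \<le> \<epsilon>"
    and dom: "\<And>p q. strict_mono p \<Longrightarrow> strict_mono q \<Longrightarrow>
      limsup (\<lambda>i. ereal (M (p i) (q i))) \<le> limsup (\<lambda>i. ereal (D (p i) (q i)))"
    and nonneg: "\<And>p q. 0 \<le> D p q" and "\<epsilon> > 0"
  shows "\<exists>\<gamma>>0. \<exists>N. \<forall>p q. N \<le> p \<longrightarrow> N \<le> q \<longrightarrow> D p q < \<epsilon> + \<gamma> \<longrightarrow>
    D (Suc p) (Suc q) \<le> \<epsilon>"
proof -
  obtain \<delta> N1 where "\<delta> > 0" and N1: "\<forall>p q. N1 \<le> p \<and> N1 \<le> q \<and> M p q < \<delta> + \<epsilon> \<longrightarrow>
      D (Suc p) (Suc q) \<le> \<epsilon>"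
    using i \<open>\<epsilon> > 0\<close> by blast
  have "\<exists>N2. \<forall>p q. N2 \<le> p \<longrightarrow> N2 \<le> q \<longrightarrow> D p q \<le> \<epsilon> + \<delta>/2 \<longrightarrow>
      M p q < D p q + \<delta>/2"
    using \<open>\<delta> > 0\<close> by (intro limsup_dominated_eventually_less) (simp_all add: dom nonneg)
  then obtain N2 where N2: "\<forall>p q. N2 \<le> p \<longrightarrow> N2 \<le> q \<longrightarrow> D p q \<le> \<epsilon> + \<delta>/2 \<longrightarrow>
      M p q < D p q + \<delta>/2"
    by blast
  have "D (Suc p) (Suc q) \<le> \<epsilon>"
    if "max N1 N2 \<le> p" "max N1 N2 \<le> q" "D p q < \<epsilon> + \<delta>/2" for p q
  proof -
    have "M p q < \<delta> + \<epsilon>"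
      using that N2 by fastforce
    then show ?thesis
      using that N1 by simp
  qed
  moreover have "\<delta>/2 > 0"
    using \<open>\<delta> > 0\<close> by simp
  ultimately show ?thesis
    by blast
qed

lemma eventually_small_hops_le:
  fixes D :: "nat \<Rightarrow> nat \<Rightarrow> real"
  assumes "(\<lambda>n. D n (Suc n)) \<longlonglongrightarrow> 0" "(\<lambda>n. D n (n + 2)) \<longlonglongrightarrow> 0"
    and sym: "\<And>i j. D i j = D j i" and "c > 0"
  shows "\<exists>N. \<forall>i j. N \<le> i \<longrightarrow> N \<le> j \<longrightarrow> small_hop i j \<longrightarrow> D i j \<le> c"
proof -
  obtain N1 N2 where "\<forall>n\<ge>N1. D n (Suc n) < c" "\<forall>n\<ge>N2. D n (n + 2) < c"
    using assms(1,2)[THEN order_tendstoD(2), OF \<open>c > 0\<close>]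
    unfolding eventually_sequentially by blast
  then have "D i j \<le> c" if "max N1 N2 \<le> i" "max N1 N2 \<le> j" "small_hop i j" for i j
    using that sym[of i j] by (auto simp: small_hop_def less_imp_le)
  then show ?thesis
    by blast
qed

lemma short_range_le:
  fixes c :: real
  assumes gm: "nu_gen_metric \<nu> X d" and inj: "inj y" and range: "range y \<subseteq> X"
    and hops: "\<And>i j. N \<le> i \<Longrightarrow> N \<le> j \<Longrightarrow> small_hop i j \<Longrightarrow> d (y i) (y j) \<le> c"
    and "N \<le> j" "1 \<le> k" "k \<le> \<nu> + 1"
  shows "d (y j) (y (j + k)) \<le> (real \<nu> + 1) * c"
proof -
  define L where "L = map ((+) j) (hop_path k (\<nu> + 1))"
  note P = hop_path_props[OF \<open>1 \<le> k\<close> \<open>k \<le> \<nu> + 1\<close>]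
  have "hop_path k (\<nu> + 1) \<noteq> []"
    using P(2) by auto
  then have "hd L = j" "last L = j + k"
    using P by (simp_all add: L_def hd_map last_map)
  then have "d (y j) (y (j + k)) = d (y (hd L)) (y (last L))"
    by simp
  also have "\<dots> \<le> pathlen d (map y L)"
    using P by (intro nu_gen_metric_pathlen_inj[OF gm inj range]) (simp_all add: L_def distinct_map)
  also have "\<dots> \<le> real (length L - 1) * c"
    using hops by (rule pathlen_small_hops_le)
      (use P \<open>N \<le> j\<close> in \<open>auto simp: L_def successively_map\<close>)
  also have "\<dots> = (real \<nu> + 1) * c"
    using P by (simp add: L_def)
  finally show ?thesis .
qed

lemma tail_distance_less:
  fixes c \<epsilon> :: real
  assumes gm: "nu_gen_metric \<nu> X d" and "\<nu> \<ge> 1" and inj: "inj y" and range: "range y \<subseteq> X"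
    and hops: "\<And>i j. N \<le> i \<Longrightarrow> N \<le> j \<Longrightarrow> small_hop i j \<Longrightarrow> d (y i) (y j) \<le> c"
    and contr: "\<And>p q. N \<le> p \<Longrightarrow> N \<le> q \<Longrightarrow> d (y p) (y q) < \<epsilon> + (real \<nu> + 1) * c \<Longrightarrow>
      d (y (Suc p)) (y (Suc q)) \<le> \<epsilon>"
    and "\<epsilon> > 0" "c > 0"
  shows "N \<le> j \<Longrightarrow> 1 \<le> k \<Longrightarrow> d (y j) (y (j + k)) < \<epsilon> + (real \<nu> + 1) * c"
proof (induction k arbitrary: j rule: less_induct)
  case (less k)
  show ?case
  proof (cases "k \<le> \<nu> + 1")
    case True
    then show ?thesis
      using short_range_le[OF gm inj range hops] less.prems \<open>\<epsilon> > 0\<close> by fastforce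
  next
    case False
    define L where "L = [j..<j + \<nu>] @ [j + \<nu>, j + k]"
    have "d (y j) (y (j + k)) \<le> pathlen d (map y L)"
      using nu_gen_metric_pathlen_inj[OF gm inj range, of L] False \<open>\<nu> \<ge> 1\<close>
      by (simp add: L_def)
    also have "\<dots> = pathlen d (map y [j..<Suc (j + \<nu>)]) + d (y (j + \<nu>)) (y (j + k))"
      using pathlen_append[of d "map y [j..<j + \<nu>]" "y (j + \<nu>)" "[y (j + k)]"]
      by (simp add: L_def)
    also have "pathlen d (map y [j..<Suc (j + \<nu>)]) \<le> \<nu> * c"
      using pathlen_small_hops_le[of N d y c, OF hops successively_small_hop_upt[of j "Suc (j + \<nu>)"]]
        less.prems
      by (simp del: upt_Suc)
    also have "d (y (j + \<nu>)) (y (j + k)) \<le> \<epsilon>"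
    proof -
      define p q where "p = j + \<nu> - 1" and "q = j + k - 1"
      have "Suc p = j + \<nu>" "Suc q = j + k" "q = p + (k - \<nu>)" "N \<le> p" "N \<le> q"
        using less.prems False \<open>\<nu> \<ge> 1\<close> by (auto simp: p_def q_def)
      moreover have "d (y p) (y (p + (k - \<nu>))) < \<epsilon> + (real \<nu> + 1) * c"
        using less.IH[of "k - \<nu>" p] less.prems False \<open>\<nu> \<ge> 1\<close> \<open>N \<le> p\<close> by simp
      ultimately have "d (y (Suc p)) (y (Suc q)) \<le> \<epsilon>"
        using contr[of p q] by metis
      with \<open>Suc p = j + \<nu>\<close> \<open>Suc q = j + k\<close> show ?thesis
        by simp
    qed
    finally show ?thesis
      using \<open>c > 0\<close> by (simp add: algebra_simps)
  qed
qed

lemma gen_cauchy_inj_seq: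
  assumes gm: "nu_gen_metric \<nu> X d" and "\<nu> \<ge> 1" and inj: "inj y" and range: "range y \<subseteq> X"
    and i: "\<forall>\<epsilon>>0. \<exists>\<delta>>0. \<exists>N. \<forall>p q. N \<le> p \<and> N \<le> q \<and> m (y p) (y q) < \<delta> + \<epsilon> \<longrightarrow>
      d (y (Suc p)) (y (Suc q)) \<le> \<epsilon>"
    and ii: "\<And>p q. strict_mono p \<Longrightarrow> strict_mono q \<Longrightarrow>
      limsup (\<lambda>i. ereal (m (y (p i)) (y (q i)))) \<le> limsup (\<lambda>i. ereal (d (y (p i)) (y (q i))))"
    and lim1: "(\<lambda>n. d (y n) (y (Suc n))) \<longlonglongrightarrow> 0" and lim2: "(\<lambda>n. d (y n) (y (n + 2))) \<longlonglongrightarrow> 0"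
  shows "gen_cauchy d y"
proof (rule gen_cauchyI)
  have "y i \<in> X" for i
    using range by blast
  then have nonneg: "0 \<le> d (y i) (y j)" and sym: "d (y i) (y j) = d (y j) (y i)" for i j
    using nu_gen_metricD[OF gm] by simp_all
  then show "0 \<le> d (y i) (y j)" for i j
    by simp
  fix e :: real
  assume "e > 0"
  define \<epsilon> where "\<epsilon> = e / 2"
  have "\<epsilon> > 0"
    using \<open>e > 0\<close> by (simp add: \<epsilon>_def)
  then obtain \<gamma> N1 where "\<gamma> > 0" and contr: "\<forall>p q. N1 \<le> p \<longrightarrow> N1 \<le> q \<longrightarrow>
      d (y p) (y q) < \<epsilon> + \<gamma> \<longrightarrow> d (y (Suc p)) (y (Suc q)) \<le> \<epsilon>"
    using eventual_contraction[of "\<lambda>p q. m (y p) (y q)" "\<lambda>p q. d (y p) (y q)"] i ii nonneg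
    by blast
  define c where "c = min \<gamma> \<epsilon> / (real \<nu> + 1)"
  have "c > 0" "(real \<nu> + 1) * c \<le> \<gamma>" "(real \<nu> + 1) * c \<le> \<epsilon>"
    using \<open>\<gamma> > 0\<close> \<open>\<epsilon> > 0\<close> by (simp_all add: c_def)
  obtain N2 where hops: "\<forall>i j. N2 \<le> i \<longrightarrow> N2 \<le> j \<longrightarrow> small_hop i j \<longrightarrow> d (y i) (y j) \<le> c"
    using eventually_small_hops_le[of "\<lambda>i j. d (y i) (y j)"] lim1 lim2 sym \<open>c > 0\<close> by blast
  define N0 where "N0 = max N1 N2"
  have tail: "d (y n) (y (n + k)) < \<epsilon> + (real \<nu> + 1) * c" if "N0 \<le> n" "1 \<le> k" for n k
  proof (rule tail_distance_less[OF gm \<open>\<nu> \<ge> 1\<close> inj range, where N = N0])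
    show "d (y i) (y j) \<le> c" if "N0 \<le> i" "N0 \<le> j" "small_hop i j" for i j
      using hops that by (simp add: N0_def)
    show "d (y (Suc p)) (y (Suc q)) \<le> \<epsilon>"
      if "N0 \<le> p" "N0 \<le> q" "d (y p) (y q) < \<epsilon> + (real \<nu> + 1) * c" for p q
      using contr that \<open>(real \<nu> + 1) * c \<le> \<gamma>\<close> by (simp add: N0_def)
  qed (use that \<open>\<epsilon> > 0\<close> \<open>c > 0\<close> in auto)
  have "d (y n) (y (n + 1 + k)) \<le> e" if "N0 \<le> n" for n k
    using tail[of n "1 + k"] that \<open>(real \<nu> + 1) * c \<le> \<epsilon>\<close> by (simp add: \<epsilon>_def add.assoc)
  then show "\<exists>N. \<forall>n\<ge>N. \<forall>k. d (y n) (y (n + 1 + k)) \<le> e"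
    by blast
qed

lemma orbit_not_inj_eventually_const:
  fixes d :: "'a \<Rightarrow> 'a \<Rightarrow> real"
  assumes step: "\<And>n. y (Suc n) = T (y n)" and "\<not> inj y"
    and lim: "(\<lambda>n. d (y n) (y (Suc n))) \<longlonglongrightarrow> 0"
    and zero: "\<And>n. d (y n) (y (Suc n)) = 0 \<Longrightarrow> y (Suc n) = y n"
  obtains i where "\<forall>n\<ge>i. y n = y i"
proof -
  have y_add: "y (t + n) = (T ^^ t) (y n)" for t n
    by (induction t) (simp_all add: step)
  obtain a b where "a \<noteq> b" "y a = y b"
    using \<open>\<not> inj y\<close> unfolding inj_def by blast
  then obtain i j where "i < j" "y i = y j"
    by (metis linorder_neqE_nat)
  define p where "p = j - i"
  have "p > 0" "y (i + p) = y i"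
    using \<open>i < j\<close> \<open>y i = y j\<close> by (simp_all add: p_def)
  have periodic: "y (t + i + r * p) = y (t + i)" for r t
  proof (induction r)
    case (Suc r)
    have "y (t + i + Suc r * p) = (T ^^ (t + r * p)) (y (i + p))"
      using y_add[of "t + r * p" "i + p"] by (simp add: algebra_simps)
    also have "\<dots> = y (t + i + r * p)"
      using \<open>y (i + p) = y i\<close> y_add[of "t + r * p" i] by (simp add: algebra_simps)
    finally show ?case
      using Suc by simp
  qed simp
  have vanish: "d (y (t + i)) (y (Suc t + i)) = 0" for t
  proof -
    have "strict_mono (\<lambda>r. t + i + r * p)"
      using \<open>p > 0\<close> by (simp add: strict_mono_Suc_iff)
    then have "(\<lambda>r. d (y (t + i + r * p)) (y (Suc (t + i + r * p)))) \<longlonglongrightarrow> 0"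
      using LIMSEQ_subseq_LIMSEQ[OF lim] by (simp add: comp_def)
    moreover have "y (Suc (t + i + r * p)) = y (Suc t + i)" for r
      using periodic[of "Suc t" r] by simp
    ultimately have "(\<lambda>r. d (y (t + i)) (y (Suc t + i))) \<longlonglongrightarrow> 0"
      using periodic by simp
    then show ?thesis
      by (simp add: LIMSEQ_const_iff)
  qed
  have "y (t + i) = y i" for t
  proof (induction t)
    case (Suc t)
    have "y (Suc (t + i)) = y (t + i)"
      using vanish[of t] by (intro zero) simp
    with Suc show ?case
      by simp
  qed simp
  then have "y n = y i" if "i \<le> n" for n
    using that by (metis le_add_diff_inverse2)
  then show thesis
    using that by blast
qed

lemma gen_cauchy_orbit_not_inj:
  assumes gm: "nu_gen_metric \<nu> X d" and range: "range y \<subseteq> X"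
    and step: "\<And>n. y (Suc n) = T (y n)" and "\<not> inj y"
    and lim: "(\<lambda>n. d (y n) (y (Suc n))) \<longlonglongrightarrow> 0"
  shows "gen_cauchy d y"
proof -
  have "y n \<in> X" for n
    using range by blast
  note metric = nu_gen_metricD[OF gm this this]
  obtain i where const: "\<forall>n\<ge>i. y n = y i"
    using orbit_not_inj_eventually_const[OF step \<open>\<not> inj y\<close> lim] metric(2) by metis
  have "d (y n) (y (n + 1 + k)) = 0" if "i \<le> n" for n k
  proof -
    have "y n = y i" "y (n + 1 + k) = y i"
      using const that by (blast intro: trans_le_add1)+
    then show ?thesis
      using metric(2)[of i i] by simp
  qed
  then show ?thesis
    by (intro gen_cauchyI metric(1)) (metis order.strict_implies_order)
qed

theorem theorem3p3:
  fixes \<nu> :: nat and X :: "'a set" and d m :: "'a \<Rightarrow> 'a \<Rightarrow> real"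
    and T :: "'a \<Rightarrow> 'a" and x :: 'a
  assumes nu: "\<nu> \<ge> 1"
    and gm: "nu_gen_metric \<nu> X d"
    and TX: "\<forall>y\<in>X. T y \<in> X"
    and m_nonneg: "\<forall>y\<in>X. \<forall>z\<in>X. 0 \<le> m y z"
    and xX: "x \<in> X"
    and i: "\<forall>\<epsilon>>0. \<exists>\<delta>>0. \<exists>N::nat. \<forall>p q. p \<ge> N \<and> q \<ge> N \<and>
              m ((T ^^ p) x) ((T ^^ q) x) < \<delta> + \<epsilon> \<longrightarrow>
              d ((T ^^ (p + 1)) x) ((T ^^ (q + 1)) x) \<le> \<epsilon>"
    and ii: "\<forall>p q :: nat \<Rightarrow> nat. strict_mono p \<and> strict_mono q \<longrightarrow>
              limsup (\<lambda>i. ereal (m ((T ^^ p i) x) ((T ^^ q i) x)))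
                \<le> limsup (\<lambda>i. ereal (d ((T ^^ p i) x) ((T ^^ q i) x)))"
    and iii: "(\<lambda>n. d ((T ^^ n) x) ((T ^^ (n + 1)) x) + d ((T ^^ n) x) ((T ^^ (n + 2)) x))
              \<longlonglongrightarrow> 0"
  shows "gen_cauchy d (\<lambda>n. (T ^^ n) x)"
proof -
  define y where "y = (\<lambda>n. (T ^^ n) x)"
  have step: "y (Suc n) = T (y n)" for n
    by (simp add: y_def)
  have "y n \<in> X" for n
    by (induction n) (simp_all add: y_def xX TX)
  then have range: "range y \<subseteq> X" and nonneg: "0 \<le> d (y i) (y j)" for i j
    using nu_gen_metricD[OF gm] by auto
  have iii': "(\<lambda>n. d (y n) (y (Suc n)) + d (y n) (y (n + 2))) \<longlonglongrightarrow> 0"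
    using iii by (simp add: y_def)
  have lim1: "(\<lambda>n. d (y n) (y (Suc n))) \<longlonglongrightarrow> 0" and lim2: "(\<lambda>n. d (y n) (y (n + 2))) \<longlonglongrightarrow> 0"
    by (rule tendsto_sandwich[OF _ _ tendsto_const iii']; simp add: nonneg)+
  have "gen_cauchy d y"
  proof (cases "inj y")
    case True
    have "\<forall>\<epsilon>>0. \<exists>\<delta>>0. \<exists>N. \<forall>p q. N \<le> p \<and> N \<le> q \<and> m (y p) (y q) < \<delta> + \<epsilon> \<longrightarrow>
        d (y (Suc p)) (y (Suc q)) \<le> \<epsilon>"
      using i by (simp add: y_def)
    moreover have "limsup (\<lambda>i. ereal (m (y (p i)) (y (q i))))
        \<le> limsup (\<lambda>i. ereal (d (y (p i)) (y (q i))))" if "strict_mono p" "strict_mono q" for p q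
      using ii that by (simp add: y_def)
    ultimately show ?thesis
      by (rule gen_cauchy_inj_seq[OF gm nu True range _ _ lim1 lim2])
  next
    case False
    then show ?thesis
      by (rule gen_cauchy_orbit_not_inj[OF gm range step _ lim1])
  qed
  then show ?thesis
    by (simp add: y_def)
qed

end
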